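(* Let $m\ge1$ and let $a$ be an integer with $\gcd(a,m)=1$. Then $$\operatorname{CC}(\operatorname{Hol}_a(\mathbb{Z}/m\mathbb{Z}))=\mathop{\divideontimes}_{p\mid m}\Gamma_{p^{\nu_p(m)}}\big(\operatorname{o}_{p^{\nu_p(m)}}(a)\big),$$ where the $\divideontimes$-product ranges over the primes $p$ dividing $m$ (the empty $\divideontimes$-product being $x_1$), $\operatorname{Hol}_a(\mathbb{Z}/m\mathbb{Z})=\{x\mapsto ax+b: b\in\mathbb{Z}/m\mathbb{Z}\}$, and $\Gamma_{p^k}(o)$ denotes the cycle counter of $\operatorname{Hol}_{a'}(\mathbb{Z}/p^k\mathbb{Z})$ for any $a'$ with $\operatorname{o}_{p^k}(a')=o$ (which depends only on $o$).
   Context: $\operatorname{CC}(X)=\sum_{g\in X}\operatorname{CT}(g)$, where $\operatorname{CT}(g)=x_1^{k_1}x_2^{k_2}\cdots$ with $k_i$ the number of $i$-cycles of $g$. For $p\nmid a$: if $p>2$, $\operatorname{o}_{p^k}(a)$ is the multiplicative order of $a$ mod $p^k$; if $p=2$, $k\le1$, $\operatorname{o}_{2^k}(a)=(0,1)$; if $p=2$, $k\ge2$, writing $a\equiv(-1)^\epsilon a'\pmod{2^k}$ with $\epsilon\in\{0,1\}$ and $a'$ a power of $5$, $\operatorname{o}_{2^k}(a)=(\epsilon,\operatorname{ord}_{2^k}(a'))$. The $\divideontimes$-product on $\mathbb{Q}[x_1,x_2,\dots]$ is the bilinear product determined on monomials by $x_i^e\divideontimes x_j^f=x_{\operatorname{lcm}(i,j)}^{ef\gcd(i,j)}$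 and $\big(\prod_i x_i^{e_i}\big)\divideontimes\big(\prod_jx_j^{f_j}\big)=\prod_{i,j}(x_i^{e_i}\divideontimes x_j^{f_j})$ (ordinary product on the right); it is commutative and associative. *)

theory Defs
  imports "HOL-Number_Theory.Number_Theory" "HOL-Library.Poly_Mapping"
begin

text \<open>Polynomials in Q[x_1,x_2,...]: a monomial x_1^k_1 x_2^k_2 ... is its
  exponent vector (finitely supported nat to nat); a polynomial is a finitely
  supported map from monomials to rational coefficients.\<close>

type_synonym mono = "nat \<Rightarrow>\<^sub>0 nat"
type_synonym cpoly = "mono \<Rightarrow>\<^sub>0 rat"

definition monomial_poly :: "mono \<Rightarrow> cpoly" where
  "monomial_poly \<alpha> = Poly_Mapping.single \<alpha> 1"

definition x1 :: cpoly where
  "x1 = monomial_poly (Poly_Mapping.single 1 1)"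

definition orbit_of :: "('a \<Rightarrow> 'a) \<Rightarrow> 'a \<Rightarrow> 'a set" where
  "orbit_of g x = {(g ^^ n) x | n. True}"

definition cycles_on :: "('a \<Rightarrow> 'a) \<Rightarrow> 'a set \<Rightarrow> 'a set set" where
  "cycles_on g S = orbit_of g ` S"

definition num_cycles :: "('a \<Rightarrow> 'a) \<Rightarrow> 'a set \<Rightarrow> nat \<Rightarrow> nat" where
  "num_cycles g S i = card {c \<in> cycles_on g S. card c = i}"

definition CT :: "('a \<Rightarrow> 'a) \<Rightarrow> 'a set \<Rightarrow> cpoly" where
  "CT g S = monomial_poly (Abs_poly_mapping (num_cycles g S))"

definition CC :: "('a \<Rightarrow> 'a) set \<Rightarrow> 'a set \<Rightarrow> cpoly" where
  "CC X S = (\<Sum>g\<in>X. CT g S)"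

text \<open>Z/mZ is represented by {0..<m} \<subseteq> int;
  Hol_a(Z/mZ) = {x \<mapsto> a x + b : b \<in> Z/mZ}.\<close>
definition Zmod :: "nat \<Rightarrow> int set" where
  "Zmod m = {0..<int m}"

definition Hol :: "int \<Rightarrow> nat \<Rightarrow> (int \<Rightarrow> int) set" where
  "Hol a m = {(\<lambda>x. (a * x + b) mod int m) | b. b \<in> Zmod m}"

definition CC_Hol :: "int \<Rightarrow> nat \<Rightarrow> cpoly" where
  "CC_Hol a m = CC (Hol a m) (Zmod m)"

definition star_mono :: "mono \<Rightarrow> mono \<Rightarrow> mono" where
  "star_mono \<alpha> \<beta> =
     (\<Sum>i\<in>Poly_Mapping.keys \<alpha>. \<Sum>j\<in>Poly_Mapping.keys \<beta>.
        Poly_Mapping.single (lcm i j) (Poly_Mapping.lookup \<alpha> i * Poly_Mapping.lookup \<beta> j * gcd i j))"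

definition star :: "cpoly \<Rightarrow> cpoly \<Rightarrow> cpoly" where
  "star P Q =
     (\<Sum>\<alpha>\<in>Poly_Mapping.keys P. \<Sum>\<beta>\<in>Poly_Mapping.keys Q.
        Poly_Mapping.single (star_mono \<alpha> \<beta>) (Poly_Mapping.lookup P \<alpha> * Poly_Mapping.lookup Q \<beta>))"

definition star_prod :: "(nat \<Rightarrow> cpoly) \<Rightarrow> nat set \<Rightarrow> cpoly" where
  "star_prod f A = foldr (\<lambda>p acc. star (f p) acc) (sorted_list_of_set A) x1"

text \<open>The invariant o_{p^k}(a) (for p not dividing a). Encoded uniformly as a pair:
  for odd p it is (0, multiplicative order of a mod p^k).\<close>
definition ord_int :: "nat \<Rightarrow> int \<Rightarrow> nat" where
  "ord_int n a = ord n (nat (a mod int n))"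

definition oinv :: "nat \<Rightarrow> nat \<Rightarrow> int \<Rightarrow> nat \<times> nat" where
  "oinv p k a =
    (if p > 2 then (0, ord_int (p ^ k) a)
     else if k \<le> 1 then (0, 1)
     else (SOME (e, d). e \<in> {0, 1} \<and>
             (\<exists>j::nat. [a = (-1) ^ e * 5 ^ j] (mod int (2 ^ k)) \<and>
                       d = ord_int (2 ^ k) (5 ^ j))))"

definition Gamma :: "nat \<Rightarrow> nat \<Rightarrow> nat \<times> nat \<Rightarrow> cpoly" where
  "Gamma p k ov = CC_Hol (SOME a'. \<not> int p dvd a' \<and> oinv p k a' = ov) (p ^ k)"

end

(*
  Write CC(a, n) for the cycle counter of Hol_a(Z/n). An affine map x -> a x + b of Z/mn with
  coprime m, n is, by the Chinese remainder theorem, the product of its reductions mod m and mod n,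
  and the period of a point is the lcm of the periods of its two components. Counting points by
  period, this is exactly the star product of the two cycle types, so CC(a, mn) is the star
  product of CC(a, m) and CC(a, n), and CC(a, m) is the star product of the CC(a, p^k) over the
  prime powers exactly dividing m.

  For a prime power n = p^k, CC(a', n) = CC(a, n) as soon as a' = a^u mod n with u prime to n!:
  the u-th iterate of x -> a x + b is x -> a^u x + (1 + a + ... + a^(u-1)) b, it has the same
  cycles because u is prime to all periods, and its translation part runs over Z/n with b.
  Finally o_{p^k}(a) determines a up to such powers, since the units mod p^k form a cyclic
  group for odd p and are the residues +-5^j for p = 2.
*)

theory Submission
  imports Defs
begin

section \<open>Periods and orbits\<close>

definition periodic :: "('a \<Rightarrow> 'a) \<Rightarrow> 'a \<Rightarrow> bool" where
  "periodic g x \<longleftrightarrow> (\<exists>N>0. (g ^^ N) x = x)"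

definition period :: "('a \<Rightarrow> 'a) \<Rightarrow> 'a \<Rightarrow> nat" where
  "period g x = (LEAST d. 0 < d \<and> (g ^^ d) x = x)"

lemma funpow_add_apply: "(g ^^ (m + n)) x = (g ^^ m) ((g ^^ n) x)"
  by (simp add: funpow_add)

lemma
  assumes "periodic g x"
  shows period_pos: "0 < period g x" and funpow_period: "(g ^^ period g x) x = x"
proof -
  from assms obtain N where "0 < N \<and> (g ^^ N) x = x" unfolding periodic_def by blast
  hence "0 < period g x \<and> (g ^^ period g x) x = x" unfolding period_def by (rule LeastI)
  thus "0 < period g x" "(g ^^ period g x) x = x" by auto
qed

lemma period_minimal: "0 < d \<Longrightarrow> d < period g x \<Longrightarrow> (g ^^ d) x \<noteq> x"
  unfolding period_def using not_less_Least by blast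

lemma funpow_period_mult:
  assumes "periodic g x" shows "(g ^^ (period g x * q)) x = x"
  by (induction q) (simp_all add: funpow_add funpow_period[OF assms])

lemma funpow_mod_period:
  assumes "periodic g x" shows "(g ^^ (n mod period g x)) x = (g ^^ n) x"
proof -
  have "(g ^^ n) x = (g ^^ (n mod period g x)) ((g ^^ (period g x * (n div period g x))) x)"
    by (metis funpow_add mod_div_mult_eq mult.commute o_apply)
  thus ?thesis by (simp add: funpow_period_mult[OF assms])
qed

lemma period_dvd_iff:
  assumes "periodic g x" shows "(g ^^ d) x = x \<longleftrightarrow> period g x dvd d"
proof
  assume "(g ^^ d) x = x"
  hence "(g ^^ (d mod period g x)) x = x" by (simp only: funpow_mod_period[OF assms])
  moreover have "d mod period g x < period g x" using period_pos[OF assms] by simp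
  ultimately have "\<not> 0 < d mod period g x" using period_minimal[of "d mod period g x" g x] by blast
  thus "period g x dvd d" by (simp add: dvd_eq_mod_eq_0)
next
  assume "period g x dvd d"
  then obtain q where "d = period g x * q" ..
  thus "(g ^^ d) x = x" by (simp only: funpow_period_mult[OF assms])
qed

lemma funpow_eq_imp_cong_period:
  assumes "periodic g x" "(g ^^ i) x = (g ^^ j) x" "i \<le> j"
  shows "[i = j] (mod period g x)"
proof -
  define P where "P = period g x"
  obtain d where j: "j = i + d" using assms(3) le_Suc_ex by blast
  have le: "i \<le> P * i" using period_pos[OF assms(1)] unfolding P_def by simp
  have "x = (g ^^ (P * i)) x" using funpow_period_mult[OF assms(1)] unfolding P_def by simp
  also have "\<dots> = (g ^^ (P * i - i + i)) x" using le by simp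
  also have "\<dots> = (g ^^ (P * i - i)) ((g ^^ j) x)" unfolding funpow_add_apply assms(2) ..
  also have "\<dots> = (g ^^ (P * i - i + j)) x" by (rule funpow_add_apply[symmetric])
  also have "P * i - i + j = d + P * i" using le j by simp
  also have "(g ^^ (d + P * i)) x = (g ^^ d) x"
    unfolding funpow_add_apply using funpow_period_mult[OF assms(1)] unfolding P_def by simp
  finally have "(g ^^ d) x = x" ..
  thus ?thesis unfolding period_dvd_iff[OF assms(1)] cong_def P_def j
    by (metis add_cancel_right_right dvd_eq_mod_eq_0 mod_add_right_eq)
qed

lemma funpow_eq_iff_cong_period:
  assumes "periodic g x" shows "(g ^^ i) x = (g ^^ j) x \<longleftrightarrow> [i = j] (mod period g x)"
proof
  assume "(g ^^ i) x = (g ^^ j) x"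
  thus "[i = j] (mod period g x)"
    using funpow_eq_imp_cong_period[OF assms] cong_sym by (metis nle_le)
next
  assume "[i = j] (mod period g x)"
  thus "(g ^^ i) x = (g ^^ j) x" using funpow_mod_period[OF assms] unfolding cong_def by metis
qed

lemma mem_orbit_of_iff: "y \<in> orbit_of g x \<longleftrightarrow> (\<exists>n. y = (g ^^ n) x)"
  unfolding orbit_of_def by simp

lemma self_in_orbit_of: "x \<in> orbit_of g x"
  unfolding orbit_of_def by (auto intro: exI[of _ 0])

lemma orbit_of_eq_image:
  assumes "periodic g x" shows "orbit_of g x = (\<lambda>i. (g ^^ i) x) ` {..<period g x}"
proof -
  have "(g ^^ n) x \<in> (\<lambda>i. (g ^^ i) x) ` {..<period g x}" for n
    using funpow_mod_period[OF assms, of n] period_pos[OF assms]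
    by (metis lessThan_iff mod_less_divisor rev_image_eqI)
  thus ?thesis unfolding orbit_of_def by auto
qed

lemma card_orbit_of:
  assumes "periodic g x" shows "card (orbit_of g x) = period g x"
proof -
  have "inj_on (\<lambda>i. (g ^^ i) x) {..<period g x}"
    by (rule inj_onI) (simp add: funpow_eq_iff_cong_period[OF assms] cong_def)
  thus ?thesis by (simp add: orbit_of_eq_image[OF assms] card_image)
qed

lemma periodic_funpow:
  assumes "periodic g x" shows "periodic g ((g ^^ n) x)"
proof -
  have "(g ^^ period g x) ((g ^^ n) x) = (g ^^ n) ((g ^^ period g x) x)"
    by (metis add.commute funpow_add_apply)
  also have "\<dots> = (g ^^ n) x" by (simp only: funpow_period[OF assms])
  finally show ?thesis
    unfolding periodic_def using period_pos[OF assms] by (intro exI[of _ "period g x"]) simp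
qed

lemma orbit_of_funpow:
  assumes "periodic g x" shows "orbit_of g ((g ^^ n) x) = orbit_of g x"
proof -
  have "y \<in> orbit_of g x" if y: "y \<in> orbit_of g ((g ^^ n) x)" for y
  proof -
    obtain m where "y = (g ^^ m) ((g ^^ n) x)" using y unfolding mem_orbit_of_iff by blast
    thus ?thesis unfolding mem_orbit_of_iff by (metis funpow_add_apply)
  qed
  moreover have "y \<in> orbit_of g ((g ^^ n) x)" if "y \<in> orbit_of g x" for y
  proof -
    obtain m where y: "y = (g ^^ m) x" using \<open>y \<in> orbit_of g x\<close> unfolding mem_orbit_of_iff by blast
    have "n \<le> period g x * n" using period_pos[OF assms] by simp
    hence "period g x * n - n + m + n = m + period g x * n" by linarith
    hence "(g ^^ (period g x * n - n + m)) ((g ^^ n) x) = (g ^^ m) ((g ^^ (period g x * n)) x)"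
      by (simp only: funpow_add_apply[symmetric])
    also have "\<dots> = y" by (simp only: funpow_period_mult[OF assms] y)
    finally show ?thesis unfolding mem_orbit_of_iff by metis
  qed
  ultimately show ?thesis by blast
qed

lemma
  assumes "periodic g x" "y \<in> orbit_of g x"
  shows orbit_of_eq_if_mem: "orbit_of g y = orbit_of g x"
    and periodic_if_mem_orbit_of: "periodic g y"
proof -
  obtain n where "y = (g ^^ n) x" using assms(2) unfolding mem_orbit_of_iff by blast
  thus "orbit_of g y = orbit_of g x" "periodic g y"
    using orbit_of_funpow[OF assms(1)] periodic_funpow[OF assms(1)] by simp_all
qed

lemma funpow_in_closed: "g ` S \<subseteq> S \<Longrightarrow> x \<in> S \<Longrightarrow> (g ^^ n) x \<in> S"
  by (induction n) auto

lemma orbit_of_subset: "g ` S \<subseteq> S \<Longrightarrow> x \<in> S \<Longrightarrow> orbit_of g x \<subseteq> S"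
  by (auto simp: mem_orbit_of_iff intro: funpow_in_closed)

lemma periodic_if_inj_on:
  assumes "finite S" "g ` S \<subseteq> S" "inj_on g S" "x \<in> S"
  shows "periodic g x"
proof -
  have "(\<lambda>i. (g ^^ i) x) ` {..card S} \<subseteq> S" using funpow_in_closed[OF assms(2,4)] by blast
  hence "\<not> inj_on (\<lambda>i. (g ^^ i) x) {..card S}"
    using card_inj_on_le[OF _ _ assms(1)] by fastforce
  then obtain i j where ij: "i < j" "(g ^^ i) x = (g ^^ j) x"
    unfolding inj_on_def by (metis linorder_cases)
  have "bij_betw g S S" using assms(1-3) by (simp add: bij_betw_def endo_inj_surj)
  hence "inj_on (g ^^ i) S" using bij_betw_funpow bij_betw_imp_inj_on by blast
  moreover have "(g ^^ i) ((g ^^ (j - i)) x) = (g ^^ i) x"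
    using ij by (metis funpow_add_apply le_add_diff_inverse less_imp_le)
  ultimately have "(g ^^ (j - i)) x = x"
    using funpow_in_closed[OF assms(2,4)] assms(4) unfolding inj_on_def by blast
  thus ?thesis unfolding periodic_def using ij by (intro exI[of _ "j - i"]) auto
qed

lemma orbit_of_funpow_coprime:
  assumes "periodic g x" "coprime u (period g x)"
  shows "orbit_of (g ^^ u) x = orbit_of g x"
proof -
  obtain v where v: "[u * v = 1] (mod period g x)"
    using cong_solve_coprime_nat[OF assms(2)] by auto
  have "(g ^^ n) x \<in> orbit_of (g ^^ u) x" for n
  proof -
    have "[u * v * n = n] (mod period g x)" using cong_scalar_right[OF v, of n] by simp
    hence "((g ^^ u) ^^ (v * n)) x = (g ^^ n) x"
      unfolding funpow_mult using funpow_eq_iff_cong_period[OF assms(1)] by (simp add: ac_simps)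
    thus ?thesis unfolding mem_orbit_of_iff by metis
  qed
  moreover have "((g ^^ u) ^^ n) x \<in> orbit_of g x" for n
    unfolding funpow_mult mem_orbit_of_iff by blast
  ultimately show ?thesis unfolding orbit_of_def by blast
qed

lemma orbit_of_cong:
  assumes "g ` S \<subseteq> S" "\<And>y. y \<in> S \<Longrightarrow> h y = g y" "x \<in> S"
  shows "orbit_of h x = orbit_of g x"
proof -
  have "(h ^^ n) x = (g ^^ n) x" for n
    using funpow_in_closed[OF assms(1,3)] assms(2) by (induction n) simp_all
  thus ?thesis unfolding orbit_of_def by simp
qed

lemma period_le_card:
  assumes "finite S" "g ` S \<subseteq> S" "inj_on g S" "x \<in> S"
  shows "period g x \<le> card S"
  using card_orbit_of[OF periodic_if_inj_on[OF assms]] orbit_of_subset[OF assms(2,4)] assms(1)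
  by (metis card_mono)

section \<open>Cycle types\<close>

lemma period_fibre_eq_Union_cycles:
  assumes "g ` S \<subseteq> S" and per: "\<And>x. x \<in> S \<Longrightarrow> periodic g x"
  shows "{x\<in>S. period g x = L} = \<Union>{c \<in> cycles_on g S. card c = L}"
proof -
  have "x \<in> \<Union>{c \<in> cycles_on g S. card c = L}" if x: "x \<in> {x\<in>S. period g x = L}" for x
  proof -
    have "card (orbit_of g x) = L" using x card_orbit_of[OF per] by simp
    moreover have "orbit_of g x \<in> cycles_on g S" unfolding cycles_on_def using x by (intro imageI) simp
    ultimately have "orbit_of g x \<in> {c \<in> cycles_on g S. card c = L}" by simp
    thus ?thesis using self_in_orbit_of by (rule UnionI)
  qed
  moreover have "z \<in> {x\<in>S. period g x = L}" if z: "z \<in> \<Union>{c \<in> cycles_on g S. card c = L}" for z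
  proof -
    obtain x where x: "x \<in> S" "z \<in> orbit_of g x" "card (orbit_of g x) = L"
      using z unfolding cycles_on_def by auto
    have "period g z = card (orbit_of g z)"
      using card_orbit_of[OF periodic_if_mem_orbit_of[OF per[OF x(1)] x(2)]] by simp
    also have "\<dots> = L" using orbit_of_eq_if_mem[OF per[OF x(1)] x(2)] x(3) by simp
    finally show ?thesis using orbit_of_subset[OF assms(1) x(1)] x(2) by blast
  qed
  ultimately show ?thesis by (intro subset_antisym subsetI)
qed

lemma cycles_on_disjoint:
  assumes "\<And>x. x \<in> S \<Longrightarrow> periodic g x"
    and "c1 \<in> cycles_on g S" "c2 \<in> cycles_on g S" "c1 \<noteq> c2"
  shows "c1 \<inter> c2 = {}"
proof (rule ccontr)
  assume "c1 \<inter> c2 \<noteq> {}"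
  then obtain z where "z \<in> c1" "z \<in> c2" by blast
  obtain x1 x2 where x: "x1 \<in> S" "x2 \<in> S" and c: "c1 = orbit_of g x1" "c2 = orbit_of g x2"
    using assms(2,3) unfolding cycles_on_def by blast
  have "c1 = orbit_of g z" using orbit_of_eq_if_mem[OF assms(1)[OF x(1)]] \<open>z \<in> c1\<close> c(1) by simp
  moreover have "c2 = orbit_of g z" using orbit_of_eq_if_mem[OF assms(1)[OF x(2)]] \<open>z \<in> c2\<close> c(2) by simp
  ultimately show False using assms(4) by simp
qed

lemma card_period_eq_num_cycles:
  assumes "finite S" "g ` S \<subseteq> S" "inj_on g S"
  shows "card {x\<in>S. period g x = L} = L * num_cycles g S L"
proof -
  have per: "periodic g x" if "x \<in> S" for x using periodic_if_inj_on[OF assms that] .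
  define C where "C = {c \<in> cycles_on g S. card c = L}"
  have "L * card C = card (\<Union>C)"
  proof (rule card_partition)
    show "finite C" unfolding C_def cycles_on_def using assms(1) by simp
    have "\<Union>C \<subseteq> S"
      using orbit_of_subset[OF assms(2)] unfolding C_def cycles_on_def by blast
    thus "finite (\<Union>C)" using assms(1) by (rule finite_subset)
    show "\<And>c. c \<in> C \<Longrightarrow> card c = L" unfolding C_def by simp
    show "\<And>c1 c2. c1 \<in> C \<Longrightarrow> c2 \<in> C \<Longrightarrow> c1 \<noteq> c2 \<Longrightarrow> c1 \<inter> c2 = {}"
      unfolding C_def using cycles_on_disjoint[OF per] by simp
  qed
  thus ?thesis
    using period_fibre_eq_Union_cycles[OF assms(2) per, of L] unfolding num_cycles_def C_def by simp
qed

lemma num_cycles_0: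
  assumes "finite S" "g ` S \<subseteq> S"
  shows "num_cycles g S 0 = 0"
proof -
  have "card (orbit_of g x) \<noteq> 0" if "x \<in> S" for x
    using self_in_orbit_of[of x g] orbit_of_subset[OF assms(2) that] assms(1)
    by (metis card_0_eq empty_iff finite_subset)
  hence "{c \<in> cycles_on g S. card c = 0} = {}" unfolding cycles_on_def by auto
  thus ?thesis unfolding num_cycles_def by (metis card.empty)
qed

definition cycle_mono :: "('a \<Rightarrow> nat) \<Rightarrow> 'a set \<Rightarrow> mono" where
  "cycle_mono p S = Abs_poly_mapping (\<lambda>L. card {x\<in>S. p x = L} div L)"

lemma card_fibre_div_neq_0_imp_mem:
  "card {x\<in>S. p x = L} div L \<noteq> 0 \<Longrightarrow> L \<in> p ` S"
  by (metis (mono_tags, lifting) card.empty div_0 empty_Collect_eq image_eqI)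

lemma lookup_cycle_mono:
  assumes "finite S"
  shows "Poly_Mapping.lookup (cycle_mono p S) L = card {x\<in>S. p x = L} div L"
proof -
  have "{L. card {x\<in>S. p x = L} div L \<noteq> 0} \<subseteq> p ` S"
    using card_fibre_div_neq_0_imp_mem by blast
  hence "finite {L. card {x\<in>S. p x = L} div L \<noteq> 0}"
    using assms by (auto intro: finite_subset)
  thus ?thesis unfolding cycle_mono_def by simp
qed

lemma keys_cycle_mono_subset:
  "finite S \<Longrightarrow> Poly_Mapping.keys (cycle_mono p S) \<subseteq> p ` S"
  using card_fibre_div_neq_0_imp_mem by (auto simp: in_keys_iff lookup_cycle_mono)

lemma CT_eq_cycle_mono:
  assumes "finite S" "g ` S \<subseteq> S" "inj_on g S"
  shows "CT g S = monomial_poly (cycle_mono (period g) S)"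
proof -
  have "num_cycles g S L = card {x\<in>S. period g x = L} div L" for L
    using card_period_eq_num_cycles[OF assms, of L] num_cycles_0[OF assms(1,2)]
    by (cases "L = 0") simp_all
  hence "num_cycles g S = (\<lambda>L. card {x\<in>S. period g x = L} div L)" ..
  thus ?thesis unfolding CT_def cycle_mono_def by (simp only:)
qed

lemma CT_cong_orbits:
  assumes "\<And>x. x \<in> S \<Longrightarrow> orbit_of h x = orbit_of g x"
  shows "CT h S = CT g S"
proof -
  have "cycles_on h S = cycles_on g S" unfolding cycles_on_def using assms by (rule image_cong[OF refl])
  thus ?thesis unfolding CT_def num_cycles_def by simp
qed

section \<open>The star product\<close>

lemma star_mono_eq_sum:
  assumes "finite A" "Poly_Mapping.keys \<alpha> \<subseteq> A" "finite B" "Poly_Mapping.keys \<beta> \<subseteq> B"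
  shows "star_mono \<alpha> \<beta> = (\<Sum>i\<in>A. \<Sum>j\<in>B.
    Poly_Mapping.single (lcm i j) (Poly_Mapping.lookup \<alpha> i * Poly_Mapping.lookup \<beta> j * gcd i j))"
proof -
  let ?G = "\<lambda>i j. Poly_Mapping.single (lcm i j)
    (Poly_Mapping.lookup \<alpha> i * Poly_Mapping.lookup \<beta> j * gcd i j)"
  have "(\<Sum>j\<in>Poly_Mapping.keys \<beta>. ?G i j) = (\<Sum>j\<in>B. ?G i j)" for i
    by (rule sum.mono_neutral_left[OF assms(3,4)]) (auto simp: in_keys_iff)
  hence "star_mono \<alpha> \<beta> = (\<Sum>i\<in>Poly_Mapping.keys \<alpha>. \<Sum>j\<in>B. ?G i j)"
    unfolding star_mono_def by simp
  also have "\<dots> = (\<Sum>i\<in>A. \<Sum>j\<in>B. ?G i j)"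
    by (rule sum.mono_neutral_left[OF assms(1,2)]) (auto simp: in_keys_iff)
  finally show ?thesis .
qed

lemma star_eq_sum:
  assumes "finite A" "Poly_Mapping.keys P \<subseteq> A" "finite B" "Poly_Mapping.keys Q \<subseteq> B"
  shows "star P Q = (\<Sum>\<alpha>\<in>A. \<Sum>\<beta>\<in>B.
    Poly_Mapping.single (star_mono \<alpha> \<beta>) (Poly_Mapping.lookup P \<alpha> * Poly_Mapping.lookup Q \<beta>))"
proof -
  let ?G = "\<lambda>\<alpha> \<beta>. Poly_Mapping.single (star_mono \<alpha> \<beta>)
    (Poly_Mapping.lookup P \<alpha> * Poly_Mapping.lookup Q \<beta>)"
  have "(\<Sum>\<beta>\<in>Poly_Mapping.keys Q. ?G \<alpha> \<beta>) = (\<Sum>\<beta>\<in>B. ?G \<alpha> \<beta>)" for \<alpha>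
    by (rule sum.mono_neutral_left[OF assms(3,4)]) (auto simp: in_keys_iff)
  hence "star P Q = (\<Sum>\<alpha>\<in>Poly_Mapping.keys P. \<Sum>\<beta>\<in>B. ?G \<alpha> \<beta>)"
    unfolding star_def by simp
  also have "\<dots> = (\<Sum>\<alpha>\<in>A. \<Sum>\<beta>\<in>B. ?G \<alpha> \<beta>)"
    by (rule sum.mono_neutral_left[OF assms(1,2)]) (auto simp: in_keys_iff)
  finally show ?thesis .
qed

lemma star_add_left: "star (P + P') Q = star P Q + star P' Q"
proof -
  define A where "A = Poly_Mapping.keys P \<union> Poly_Mapping.keys P'"
  have "finite A" "Poly_Mapping.keys (P + P') \<subseteq> A"
    "Poly_Mapping.keys P \<subseteq> A" "Poly_Mapping.keys P' \<subseteq> A"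
    unfolding A_def using keys_add[of P P'] by auto
  thus ?thesis
    by (simp add: star_eq_sum[of A _ "Poly_Mapping.keys Q"] lookup_add distrib_right
        single_add sum.distrib)
qed

lemma star_add_right: "star Q (P + P') = star Q P + star Q P'"
proof -
  define A where "A = Poly_Mapping.keys P \<union> Poly_Mapping.keys P'"
  have "finite A" "Poly_Mapping.keys (P + P') \<subseteq> A"
    "Poly_Mapping.keys P \<subseteq> A" "Poly_Mapping.keys P' \<subseteq> A"
    unfolding A_def using keys_add[of P P'] by auto
  thus ?thesis
    by (simp add: star_eq_sum[of "Poly_Mapping.keys Q" _ A] lookup_add distrib_left
        single_add sum.distrib)
qed

lemma star_zero_left: "star 0 Q = 0"
  unfolding star_def by simp

lemma star_zero_right: "star Q 0 = 0"
  unfolding star_def by simp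

lemma star_sum_left: "finite I \<Longrightarrow> star (\<Sum>i\<in>I. P i) Q = (\<Sum>i\<in>I. star (P i) Q)"
  by (induction I rule: finite_induct) (simp_all add: star_zero_left star_add_left)

lemma star_sum_right: "finite I \<Longrightarrow> star Q (\<Sum>i\<in>I. P i) = (\<Sum>i\<in>I. star Q (P i))"
  by (induction I rule: finite_induct) (simp_all add: star_zero_right star_add_right)

lemma star_single:
  "star (Poly_Mapping.single \<alpha> c) (Poly_Mapping.single \<beta> d) =
   Poly_Mapping.single (star_mono \<alpha> \<beta>) (c * d)"
  by (subst star_eq_sum[of "{\<alpha>}" _ "{\<beta>}"]) simp_all

lemma star_prod_cong:
  assumes "\<And>p. p \<in> A \<Longrightarrow> f p = g p"
  shows "star_prod f A = star_prod g A"
proof (cases "finite A")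
  case True
  have "\<forall>p\<in>set xs. f p = g p \<Longrightarrow>
      foldr (\<lambda>p acc. star (f p) acc) xs x1 = foldr (\<lambda>p acc. star (g p) acc) xs x1" for xs
    by (induction xs) auto
  thus ?thesis unfolding star_prod_def using assms True by simp
qed (simp add: star_prod_def)

lemma star_prod_Min:
  assumes "finite A" "A \<noteq> {}"
  shows "star_prod f A = star (f (Min A)) (star_prod f (A - {Min A}))"
  unfolding star_prod_def using sorted_list_of_set_nonempty[OF assms] by simp

lemma sum_comp_eq_sum_card_fibres:
  assumes "finite S"
  shows "(\<Sum>x\<in>S. F (p x)) = (\<Sum>i\<in>p ` S. of_nat (card {x\<in>S. p x = i}) * F i)"
proof -
  have "(\<Sum>x\<in>S. F (p x)) = (\<Sum>i\<in>p ` S. \<Sum>x\<in>{x\<in>S. p x = i}. F (p x))"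
    by (rule sum.image_gen[OF assms])
  also have "\<dots> = (\<Sum>i\<in>p ` S. of_nat (card {x\<in>S. p x = i}) * F i)"
    by (intro sum.cong refl) simp
  finally show ?thesis .
qed

lemma card_filter_eq_sum: "finite A \<Longrightarrow> card {x\<in>A. P x} = (\<Sum>x\<in>A. if P x then 1 else 0)"
  using sum.inter_filter[of A "\<lambda>_. 1::nat" P] by simp

lemma star_mono_cycle_mono:
  fixes p :: "'a \<Rightarrow> nat" and q :: "'b \<Rightarrow> nat"
  assumes fin: "finite S" "finite T"
    and pos: "\<And>x. x \<in> S \<Longrightarrow> 0 < p x" "\<And>y. y \<in> T \<Longrightarrow> 0 < q y"
    and dvd: "\<And>L. L dvd card {x\<in>S. p x = L}" "\<And>L. L dvd card {y\<in>T. q y = L}"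
  shows "cycle_mono (\<lambda>(x, y). lcm (p x) (q y)) (S \<times> T) =
    star_mono (cycle_mono p S) (cycle_mono q T)"
proof (rule poly_mapping_eqI)
  fix L
  define c1 where "c1 i = card {x\<in>S. p x = i} div i" for i
  define c2 where "c2 j = card {y\<in>T. q y = j} div j" for j
  have card1: "card {x\<in>S. p x = i} = c1 i * i" for i using dvd(1)[of i] unfolding c1_def by simp
  have card2: "card {y\<in>T. q y = j} = c2 j * j" for j using dvd(2)[of j] unfolding c2_def by simp
  define F where "F = (\<Sum>i\<in>p ` S. \<Sum>j\<in>q ` T. if lcm i j = L then c1 i * c2 j * gcd i j else 0)"
  have rhs: "Poly_Mapping.lookup (star_mono (cycle_mono p S) (cycle_mono q T)) L = F"
    using fin unfolding F_def c1_def c2_def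
    by (simp add: star_mono_eq_sum[OF _ keys_cycle_mono_subset _ keys_cycle_mono_subset]
        lookup_sum lookup_single when_def lookup_cycle_mono)
  have "card {w\<in>S \<times> T. (\<lambda>(x, y). lcm (p x) (q y)) w = L}
      = (\<Sum>x\<in>S. \<Sum>y\<in>T. if lcm (p x) (q y) = L then 1 else 0)"
    using fin by (simp add: card_filter_eq_sum sum.cartesian_product case_prod_unfold)
  also have "\<dots> = (\<Sum>i\<in>p ` S. card {x\<in>S. p x = i} *
      (\<Sum>j\<in>q ` T. card {y\<in>T. q y = j} * (if lcm i j = L then 1 else 0)))"
    using sum_comp_eq_sum_card_fibres[OF fin(1), of "\<lambda>i. \<Sum>y\<in>T. if lcm i (q y) = L then 1 else 0 :: nat" p]
      sum_comp_eq_sum_card_fibres[OF fin(2), of "\<lambda>j. if lcm _ j = L then 1 else 0 :: nat" q]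
    by simp
  also have "\<dots> = (\<Sum>i\<in>p ` S. \<Sum>j\<in>q ` T. if lcm i j = L then (c1 i * c2 j * gcd i j) * L else 0)"
  proof -
    have "c1 i * i * (c2 j * j * (if lcm i j = L then 1 else 0)) =
        (if lcm i j = L then c1 i * c2 j * gcd i j * L else 0)" for i j
      using prod_gcd_lcm_nat[of i j] by (auto simp: ac_simps)
    thus ?thesis by (simp only: card1 card2 sum_distrib_left)
  qed
  also have "\<dots> = F * L" unfolding F_def sum_distrib_right by (intro sum.cong refl) simp
  finally have card: "card {w\<in>S \<times> T. (\<lambda>(x, y). lcm (p x) (q y)) w = L} = F * L" .
  have "lcm i j \<noteq> 0" if "i \<in> p ` S" "j \<in> q ` T" for i j
    using pos that by (metis imageE lcm_eq_0_iff less_irrefl)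
  hence "F = 0" if "L = 0" unfolding F_def using that by (intro sum.neutral ballI) (simp only: if_False)
  thus "Poly_Mapping.lookup (cycle_mono (\<lambda>(x, y). lcm (p x) (q y)) (S \<times> T)) L =
      Poly_Mapping.lookup (star_mono (cycle_mono p S) (cycle_mono q T)) L"
    using fin card rhs by (cases "L = 0") (simp_all add: lookup_cycle_mono)
qed

section \<open>Affine maps of \<open>\<int>/n\<close>\<close>

definition affine :: "int \<Rightarrow> nat \<Rightarrow> int \<Rightarrow> int \<Rightarrow> int" where
  "affine a n b x = (a * x + b) mod int n"

lemma mem_Zmod_iff: "x \<in> Zmod n \<longleftrightarrow> 0 \<le> x \<and> x < int n"
  unfolding Zmod_def by auto

lemma finite_Zmod [simp]: "finite (Zmod n)"
  unfolding Zmod_def by simp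

lemma card_Zmod [simp]: "card (Zmod n) = n"
  unfolding Zmod_def by simp

lemma affine_mod: "affine a n (b mod int n) = affine a n b"
  unfolding affine_def by (simp add: mod_add_right_eq)

lemma affine_image_Zmod: "affine a n b ` Zmod n \<subseteq> Zmod n"
  by (auto simp: affine_def mem_Zmod_iff)

lemma inj_on_affine:
  assumes "coprime a (int n)" shows "inj_on (affine a n b) (Zmod n)"
proof (rule inj_onI)
  fix x y assume "x \<in> Zmod n" "y \<in> Zmod n" "affine a n b x = affine a n b y"
  hence "[x * a = y * a] (mod int n)"
    unfolding affine_def cong_def by (metis cong_add_rcancel cong_def mult.commute)
  hence "[x = y] (mod int n)" using cong_mult_rcancel assms by blast
  thus "x = y" using \<open>x \<in> Zmod n\<close> \<open>y \<in> Zmod n\<close> unfolding cong_def mem_Zmod_iff by simp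
qed

lemma periodic_affine:
  "coprime a (int n) \<Longrightarrow> x \<in> Zmod n \<Longrightarrow> periodic (affine a n b) x"
  by (rule periodic_if_inj_on[OF finite_Zmod affine_image_Zmod inj_on_affine])

lemma period_affine_pos:
  "coprime a (int n) \<Longrightarrow> x \<in> Zmod n \<Longrightarrow> 0 < period (affine a n b) x"
  by (rule period_pos[OF periodic_affine])

lemma dvd_card_period_affine:
  assumes "coprime a (int n)" shows "L dvd card {x\<in>Zmod n. period (affine a n b) x = L}"
  unfolding card_period_eq_num_cycles[OF finite_Zmod affine_image_Zmod inj_on_affine[OF assms]]
  by (rule dvd_triv_left)

lemma CT_affine:
  "coprime a (int n) \<Longrightarrow>
    CT (affine a n b) (Zmod n) = monomial_poly (cycle_mono (period (affine a n b)) (Zmod n))"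
  by (rule CT_eq_cycle_mono[OF finite_Zmod affine_image_Zmod inj_on_affine])

lemma CC_Hol_eq_sum: "CC_Hol a n = (\<Sum>b\<in>Zmod n. CT (affine a n b) (Zmod n))"
proof -
  have "Hol a n = affine a n ` Zmod n" unfolding Hol_def affine_def by auto
  moreover have "affine a n b 0 = b" if "b \<in> Zmod n" for b
    using that by (simp add: affine_def mem_Zmod_iff)
  hence "inj_on (affine a n) (Zmod n)" by (metis inj_onI)
  ultimately show ?thesis unfolding CC_Hol_def CC_def by (simp add: sum.reindex)
qed

lemma funpow_affine:
  assumes "x \<in> Zmod n"
  shows "(affine a n b ^^ d) x = (a ^ d * x + b * (\<Sum>i<d. a ^ i)) mod int n"
proof (induction d)
  case 0 then show ?case using assms unfolding mem_Zmod_iff by simp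
next
  case (Suc d)
  have "(affine a n b ^^ Suc d) x = affine a n b ((affine a n b ^^ d) x)" by simp
  also have "\<dots> = (a * (a ^ d * x + b * (\<Sum>i<d. a ^ i)) + b) mod int n"
    unfolding Suc affine_def by (metis mod_add_left_eq mod_mult_right_eq)
  also have "a * (a ^ d * x + b * (\<Sum>i<d. a ^ i)) + b = a ^ Suc d * x + b * (\<Sum>i<Suc d. a ^ i)"
    by (simp add: sum.lessThan_Suc_shift sum_distrib_left algebra_simps del: sum.lessThan_Suc)
  finally show ?case .
qed

lemma funpow_semiconj:
  assumes "\<And>x. h (f x) = g (h x)" shows "h ((f ^^ d) x) = (g ^^ d) (h x)"
  by (induction d) (simp_all add: assms)

lemma funpow_affine_mod:
  assumes "m dvd n"
  shows "(affine a n b ^^ d) x mod int m = (affine a m b ^^ d) (x mod int m)"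
proof (rule funpow_semiconj)
  fix x
  have "(a * x + b) mod int n mod int m = (a * (x mod int m) + b) mod int m"
    using assms by (simp add: mod_mod_cancel) (metis mod_add_left_eq mod_mult_right_eq)
  thus "affine a n b x mod int m = affine a m b (x mod int m)" unfolding affine_def .
qed

lemma mod_in_Zmod_if_dvd:
  assumes "z \<in> Zmod N" "m dvd N" shows "z mod int m \<in> Zmod m"
proof -
  have "N \<noteq> 0" using assms(1) by (auto simp: mem_Zmod_iff)
  hence "m \<noteq> 0" using assms(2) by auto
  thus ?thesis by (simp add: mem_Zmod_iff)
qed

lemma crt_bij_betw_Zmod:
  assumes "coprime m n"
  shows "bij_betw (\<lambda>z. (z mod int m, z mod int n)) (Zmod (m * n)) (Zmod m \<times> Zmod n)"
proof -
  have inj: "inj_on (\<lambda>z. (z mod int m, z mod int n)) (Zmod (m * n))"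
  proof (rule inj_onI)
    fix x y assume xy: "x \<in> Zmod (m * n)" "y \<in> Zmod (m * n)"
      "(x mod int m, x mod int n) = (y mod int m, y mod int n)"
    hence "[x = y] (mod int m * int n)"
      using assms by (intro coprime_cong_mult) (auto simp: cong_def)
    thus "x = y" using xy(1,2) unfolding cong_def mem_Zmod_iff by simp
  qed
  moreover have "(\<lambda>z. (z mod int m, z mod int n)) ` Zmod (m * n) \<subseteq> Zmod m \<times> Zmod n"
    by (auto intro: mod_in_Zmod_if_dvd)
  ultimately show ?thesis
    by (simp add: bij_betw_def card_image card_cartesian_product card_subset_eq)
qed

lemma period_affine_mult:
  assumes "coprime m n" "coprime a (int (m * n))" "z \<in> Zmod (m * n)"
  shows "period (affine a (m * n) b) z =
    lcm (period (affine a m b) (z mod int m)) (period (affine a n b) (z mod int n))"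
proof -
  define g where "g = affine a (m * n) b"
  define g1 where "g1 = affine a m b"
  define g2 where "g2 = affine a n b"
  have zm: "z mod int m \<in> Zmod m" and zn: "z mod int n \<in> Zmod n"
    using assms(3) by (auto intro: mod_in_Zmod_if_dvd)
  have per: "periodic g z" "periodic g1 (z mod int m)" "periodic g2 (z mod int n)"
    unfolding g_def g1_def g2_def using assms(2)
    by (auto intro!: periodic_affine assms(3) zm zn)
  have "(g ^^ d) z = z \<longleftrightarrow>
      (g1 ^^ d) (z mod int m) = z mod int m \<and> (g2 ^^ d) (z mod int n) = z mod int n" for d
  proof -
    have "(g ^^ d) z \<in> Zmod (m * n)"
      unfolding g_def by (rule funpow_in_closed[OF affine_image_Zmod assms(3)])
    hence "(g ^^ d) z = z \<longleftrightarrow>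
        ((g ^^ d) z mod int m, (g ^^ d) z mod int n) = (z mod int m, z mod int n)"
      using inj_on_eq_iff[OF bij_betw_imp_inj_on[OF crt_bij_betw_Zmod[OF assms(1)]] _ assms(3)]
      by simp
    also have "\<dots> \<longleftrightarrow>
        (g1 ^^ d) (z mod int m) = z mod int m \<and> (g2 ^^ d) (z mod int n) = z mod int n"
      unfolding g_def g1_def g2_def funpow_affine_mod[OF dvd_triv_left] funpow_affine_mod[OF dvd_triv_right]
      by simp
    finally show ?thesis .
  qed
  hence "period g z dvd d \<longleftrightarrow> lcm (period g1 (z mod int m)) (period g2 (z mod int n)) dvd d" for d
    by (simp add: period_dvd_iff[OF per(1)] period_dvd_iff[OF per(2)] period_dvd_iff[OF per(3)])
  hence "period g z = lcm (period g1 (z mod int m)) (period g2 (z mod int n))"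
    by (metis dvd_antisym dvd_refl)
  thus ?thesis unfolding g_def g1_def g2_def .
qed

section \<open>Multiplicativity in the modulus\<close>

lemma cycle_mono_bij_betw:
  assumes "bij_betw \<phi> S T" "\<And>x. x \<in> S \<Longrightarrow> q (\<phi> x) = p x"
  shows "cycle_mono p S = cycle_mono q T"
proof -
  have "{y\<in>T. q y = L} = \<phi> ` {x\<in>S. p x = L}" for L
    using assms by (auto simp: bij_betw_def)
  moreover have "inj_on \<phi> {x\<in>S. p x = L}" for L
    using bij_betw_imp_inj_on[OF assms(1)] by (rule inj_on_subset) auto
  ultimately show ?thesis unfolding cycle_mono_def by (simp add: card_image)
qed

lemma cycle_mono_affine_mult:
  assumes "coprime m n" "coprime a (int (m * n))"
  shows "cycle_mono (period (affine a (m * n) b)) (Zmod (m * n)) =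
    star_mono (cycle_mono (period (affine a m b)) (Zmod m)) (cycle_mono (period (affine a n b)) (Zmod n))"
proof -
  have cop: "coprime a (int m)" "coprime a (int n)" using assms(2) by simp_all
  have "cycle_mono (period (affine a (m * n) b)) (Zmod (m * n)) =
      cycle_mono (\<lambda>(x, y). lcm (period (affine a m b) x) (period (affine a n b) y)) (Zmod m \<times> Zmod n)"
    by (rule cycle_mono_bij_betw[OF crt_bij_betw_Zmod[OF assms(1)]])
      (simp add: period_affine_mult[OF assms])
  also have "\<dots> = star_mono (cycle_mono (period (affine a m b)) (Zmod m))
      (cycle_mono (period (affine a n b)) (Zmod n))"
    by (intro star_mono_cycle_mono finite_Zmod period_affine_pos dvd_card_period_affine cop)
  finally show ?thesis .
qed

lemma CC_Hol_mult:
  assumes "coprime m n" "coprime a (int (m * n))"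
  shows "CC_Hol a (m * n) = star (CC_Hol a m) (CC_Hol a n)"
proof -
  define M where "M k b = cycle_mono (period (affine a k b)) (Zmod k)" for k b
  have CC: "CC_Hol a k = (\<Sum>b\<in>Zmod k. Poly_Mapping.single (M k b) 1)" if "coprime a (int k)" for k
  proof -
    have "CT (affine a k b) (Zmod k) = Poly_Mapping.single (M k b) 1" for b
      using CT_affine[OF that] unfolding M_def monomial_poly_def .
    thus ?thesis unfolding CC_Hol_eq_sum by (rule sum.cong[OF refl])
  qed
  have "CC_Hol a (m * n) =
      (\<Sum>b\<in>Zmod (m * n). Poly_Mapping.single (star_mono (M m (b mod int m)) (M n (b mod int n))) 1)"
    unfolding CC[OF assms(2)] M_def affine_mod cycle_mono_affine_mult[OF assms] ..
  also have "\<dots> = (\<Sum>(b1, b2)\<in>Zmod m \<times> Zmod n. Poly_Mapping.single (star_mono (M m b1) (M n b2)) 1)"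
    using sum.reindex_bij_betw[OF crt_bij_betw_Zmod[OF assms(1)],
        of "\<lambda>(b1, b2). Poly_Mapping.single (star_mono (M m b1) (M n b2)) 1"]
    by simp
  also have "\<dots> = (\<Sum>b1\<in>Zmod m. \<Sum>b2\<in>Zmod n.
      star (Poly_Mapping.single (M m b1) 1) (Poly_Mapping.single (M n b2) 1))"
    by (simp add: sum.cartesian_product star_single)
  also have "\<dots> = (\<Sum>b1\<in>Zmod m.
      star (Poly_Mapping.single (M m b1) 1) (\<Sum>b2\<in>Zmod n. Poly_Mapping.single (M n b2) 1))"
    by (simp only: star_sum_right finite_Zmod)
  also have "\<dots> = star (\<Sum>b1\<in>Zmod m. Poly_Mapping.single (M m b1) 1)
      (\<Sum>b2\<in>Zmod n. Poly_Mapping.single (M n b2) 1)"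
    by (simp only: star_sum_left finite_Zmod)
  also have "\<dots> = star (CC_Hol a m) (CC_Hol a n)"
    using assms(2) by (simp add: CC)
  finally show ?thesis .
qed

lemma CC_Hol_1: "CC_Hol a 1 = x1"
proof -
  have Z: "Zmod 1 = {0}" unfolding Zmod_def by auto
  have "periodic (affine a 1 0) 0" by (rule periodic_affine) (simp_all add: Zmod_def)
  moreover have "(affine a 1 0 ^^ 1) 0 = 0" by (simp add: affine_def)
  ultimately have "period (affine a 1 0) 0 = 1" using period_dvd_iff by (metis nat_dvd_1_iff_1)
  hence "{x\<in>{0}. period (affine a 1 0) x = L} = (if L = 1 then {0} else {})" for L by auto
  hence "cycle_mono (period (affine a 1 0)) {0} = Poly_Mapping.single 1 1"
    by (intro poly_mapping_eqI) (simp add: lookup_cycle_mono lookup_single when_def)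
  thus ?thesis unfolding CC_Hol_eq_sum Z x1_def using CT_affine[of a 1 0, unfolded Z] by simp
qed

lemma split_prime_power_factor:
  fixes p m :: nat
  assumes p: "prime p" "p dvd m" and "m \<noteq> 0"
  obtains m' where "m = p ^ multiplicity p m * m'" "coprime (p ^ multiplicity p m) m'"
    "m' \<noteq> 0" "m' < m" "prime_factors m' = prime_factors m - {p}"
    "\<And>q. q \<in> prime_factors m' \<Longrightarrow> multiplicity q m' = multiplicity q m"
proof -
  define k where "k = multiplicity p m"
  define m' where "m' = m div p ^ k"
  have "k \<ge> 1" unfolding k_def using p assms(3) by (simp add: prime_multiplicity_gt_zero_iff Suc_le_eq)
  have m: "m = p ^ k * m'" unfolding m'_def k_def by (simp add: multiplicity_dvd)
  have "\<not> p dvd m'"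
    unfolding m'_def k_def using multiplicity_decompose[OF assms(3), of p] p(1)
    by (metis not_prime_unit)
  hence cop: "coprime (p ^ k) m'" by (simp add: prime_imp_coprime[OF p(1)])
  have "m' \<noteq> 0" "p ^ k \<noteq> 0" using m assms(3) by auto
  have "1 < p ^ k" using \<open>k \<ge> 1\<close> prime_gt_1_nat[OF p(1)] by (intro one_less_power) auto
  hence "1 * m' < p ^ k * m'" using \<open>m' \<noteq> 0\<close> by (intro mult_strict_right_mono) auto
  hence "m' < m" using m by simp
  have "prime_factors m = prime_factors (p ^ k) \<union> prime_factors m'"
    unfolding m by (rule prime_factors_product[OF \<open>p ^ k \<noteq> 0\<close> \<open>m' \<noteq> 0\<close>])
  also have "prime_factors (p ^ k) = {p}"
    using \<open>k \<ge> 1\<close> p(1) by (simp add: prime_factors_power prime_prime_factors)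
  finally have pf: "prime_factors m' = prime_factors m - {p}" using \<open>\<not> p dvd m'\<close> by auto
  have "multiplicity q m' = multiplicity q m" if "q \<in> prime_factors m'" for q
  proof -
    have q: "prime q" "q \<noteq> p" using that pf by auto
    have "multiplicity q m = multiplicity q (p ^ k) + multiplicity q m'"
      unfolding m using q \<open>p ^ k \<noteq> 0\<close> \<open>m' \<noteq> 0\<close>
      by (simp add: prime_elem_multiplicity_mult_distrib)
    thus ?thesis using multiplicity_distinct_prime_power[OF q(1) p(1) q(2)] by simp
  qed
  thus ?thesis using that m cop \<open>m' \<noteq> 0\<close> \<open>m' < m\<close> pf unfolding k_def by blast
qed

lemma star_prod_prime_factors:
  fixes F :: "nat \<Rightarrow> cpoly"
  assumes one: "F 1 = x1"
    and mult: "\<And>m n. coprime m n \<Longrightarrow> m * n dvd N \<Longrightarrow> F (m * n) = star (F m) (F n)"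
  shows "m dvd N \<Longrightarrow> m \<noteq> 0 \<Longrightarrow>
    F m = star_prod (\<lambda>p. F (p ^ multiplicity p m)) (prime_factors m)"
proof (induction m rule: less_induct)
  case (less m)
  show ?case
  proof (cases "m = 1")
    case True
    thus ?thesis using one by (simp add: star_prod_def)
  next
    case False
    define A where "A = prime_factors m"
    define p where "p = Min A"
    have "A \<noteq> {}" unfolding A_def using False less.prems(2) by (simp add: prime_factorization_empty_iff)
    hence "p \<in> A" unfolding p_def A_def by simp
    hence "prime p" "p dvd m" unfolding A_def by auto
    then obtain m' where m': "m = p ^ multiplicity p m * m'" "coprime (p ^ multiplicity p m) m'"
      "m' \<noteq> 0" "m' < m" "prime_factors m' = A - {p}"
      "\<And>q. q \<in> prime_factors m' \<Longrightarrow> multiplicity q m' = multiplicity q m"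
      using split_prime_power_factor less.prems(2) unfolding A_def by metis
    have "m' dvd N" using less.prems(1) m'(1) by (metis dvd_mult_right)
    have "F m = star (F (p ^ multiplicity p m)) (F m')"
      using mult m'(1,2) less.prems(1) by metis
    also have "F m' = star_prod (\<lambda>q. F (q ^ multiplicity q m')) (prime_factors m')"
      by (rule less.IH[OF \<open>m' < m\<close> \<open>m' dvd N\<close> \<open>m' \<noteq> 0\<close>])
    also have "\<dots> = star_prod (\<lambda>q. F (q ^ multiplicity q m)) (A - {p})"
      unfolding m'(5) by (rule star_prod_cong) (simp add: m'(5,6))
    also have "star (F (p ^ multiplicity p m)) \<dots> = star_prod (\<lambda>q. F (q ^ multiplicity q m)) A"
      using star_prod_Min[OF _ \<open>A \<noteq> {}\<close>] unfolding p_def A_def by simp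
    finally show ?thesis unfolding A_def .
  qed
qed

lemma CC_Hol_eq_star_prod:
  assumes "m \<ge> 1" "coprime a (int m)"
  shows "CC_Hol a m = star_prod (\<lambda>p. CC_Hol a (p ^ multiplicity p m)) (prime_factors m)"
proof (rule star_prod_prime_factors[where N = m])
  fix k l assume kl: "coprime k l" "k * l dvd m"
  have "coprime a (int (k * l))"
    using assms(2) kl(2) by (meson coprime_divisors dvd_refl of_nat_dvd_iff)
  thus "CC_Hol a (k * l) = star (CC_Hol a k) (CC_Hol a l)" by (rule CC_Hol_mult[OF kl(1)])
qed (use assms(1) CC_Hol_1 in simp_all)

section \<open>Powers of the multiplier\<close>

text \<open>The left-hand map is the \<open>u\<close>-th iterate of \<open>x \<mapsto> a x + b\<close>; it has the same cycles
  because all periods are at most \<open>n\<close>, hence prime to \<open>u\<close>.\<close>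

lemma CT_affine_power:
  assumes a: "coprime a (int n)" and u: "coprime u (fact n)" and a': "[a' = a ^ u] (mod int n)"
  shows "CT (affine a' n ((b * (\<Sum>i<u. a ^ i)) mod int n)) (Zmod n) = CT (affine a n b) (Zmod n)"
proof (rule CT_cong_orbits)
  fix x assume x: "x \<in> Zmod n"
  have "affine a' n ((b * (\<Sum>i<u. a ^ i)) mod int n) y = (affine a n b ^^ u) y" if "y \<in> Zmod n" for y
  proof -
    have "[a' * y + (b * (\<Sum>i<u. a ^ i)) mod int n = a ^ u * y + b * (\<Sum>i<u. a ^ i)] (mod int n)"
      by (rule cong_add[OF cong_mult[OF a' cong_refl]]) simp
    thus ?thesis unfolding funpow_affine[OF that] affine_def cong_def by (simp add: ac_simps)
  qed
  moreover have "(affine a n b ^^ u) ` Zmod n \<subseteq> Zmod n"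
    using funpow_in_closed[OF affine_image_Zmod] by blast
  ultimately have "orbit_of (affine a' n ((b * (\<Sum>i<u. a ^ i)) mod int n)) x =
      orbit_of (affine a n b ^^ u) x"
    using orbit_of_cong[OF _ _ x] by blast
  also have "\<dots> = orbit_of (affine a n b) x"
  proof (rule orbit_of_funpow_coprime[OF periodic_affine[OF a x]])
    have "period (affine a n b) x dvd fact n"
      using period_affine_pos[OF a x]
        period_le_card[OF finite_Zmod affine_image_Zmod inj_on_affine[OF a] x]
      by (intro dvd_fact) (auto simp: Suc_le_eq)
    thus "coprime u (period (affine a n b) x)" using u coprime_divisors dvd_refl by blast
  qed
  finally show "orbit_of (affine a' n ((b * (\<Sum>i<u. a ^ i)) mod int n)) x = orbit_of (affine a n b) x" .
qed

lemma bij_betw_mult_mod_Zmod: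
  assumes "coprime s (int n)"
  shows "bij_betw (\<lambda>b. (b * s) mod int n) (Zmod n) (Zmod n)"
proof -
  have "inj_on (\<lambda>b. (b * s) mod int n) (Zmod n)"
  proof (rule inj_onI)
    fix x y assume xy: "x \<in> Zmod n" "y \<in> Zmod n" "(x * s) mod int n = (y * s) mod int n"
    hence "[x = y] (mod int n)" using assms cong_mult_rcancel unfolding cong_def by blast
    thus "x = y" using xy unfolding cong_def mem_Zmod_iff by simp
  qed
  moreover have "(\<lambda>b. (b * s) mod int n) ` Zmod n \<subseteq> Zmod n"
    by (auto simp: mem_Zmod_iff)
  ultimately show ?thesis by (simp add: bij_betw_def card_image card_subset_eq)
qed

lemma CC_Hol_power_eq:
  assumes "coprime a (int n)" "coprime u (fact n)"
    and "coprime (\<Sum>i<u. a ^ i) (int n)" "[a' = a ^ u] (mod int n)"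
  shows "CC_Hol a' n = CC_Hol a n"
proof -
  have "CC_Hol a' n = (\<Sum>b\<in>Zmod n. CT (affine a' n ((b * (\<Sum>i<u. a ^ i)) mod int n)) (Zmod n))"
    unfolding CC_Hol_eq_sum
    by (rule sum.reindex_bij_betw[OF bij_betw_mult_mod_Zmod[OF assms(3)], symmetric])
  thus ?thesis unfolding CT_affine_power[OF assms(1,2,4)] CC_Hol_eq_sum .
qed

section \<open>Units modulo prime powers\<close>

lemma coprime_nat_mod:
  assumes "n > 0" "coprime a (int n)"
  shows "coprime n (nat (a mod int n))"
proof -
  have "coprime (a mod int n) (int n)" using assms coprime_mod_left_iff[of "int n" a] by simp
  thus ?thesis using assms(1) by (metis coprime_commute coprime_int_iff int_nat_eq pos_mod_sign of_nat_0_less_iff)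
qed

lemma ord_int_dvd_iff:
  assumes "n > 0"
  shows "[a ^ d = 1] (mod int n) \<longleftrightarrow> ord_int n a dvd d"
proof -
  define x where "x = nat (a mod int n)"
  have x: "int x = a mod int n" unfolding x_def using assms by simp
  have "[a ^ d = 1] (mod int n) \<longleftrightarrow> [(a mod int n) ^ d = 1] (mod int n)"
    by (simp add: cong_def power_mod)
  also have "\<dots> \<longleftrightarrow> [x ^ d = 1] (mod n)" by (simp flip: x cong_int_iff)
  also have "\<dots> \<longleftrightarrow> ord n x dvd d" by (rule ord_divides)
  finally show ?thesis unfolding ord_int_def x_def .
qed

lemma ord_int_dvd_totient:
  "n > 0 \<Longrightarrow> coprime a (int n) \<Longrightarrow> ord_int n a dvd totient n"
  unfolding ord_int_def by (rule order_divides_totient[OF coprime_nat_mod])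

lemma ord_int_pos: "n > 0 \<Longrightarrow> coprime a (int n) \<Longrightarrow> ord_int n a > 0"
  unfolding ord_int_def using coprime_nat_mod by simp

text \<open>\<open>p\<close> divides \<open>1 + a + \<dots> + a\<^sup>u\<^sup>-\<^sup>1\<close> only if \<open>p | u\<close> (when \<open>a \<equiv> 1\<close>) or
  \<open>ord\<^sub>p a | u\<close> (otherwise), and both \<open>p\<close> and \<open>ord\<^sub>p a > 1\<close> divide \<open>(p\<^sup>k)!\<close>.\<close>

lemma coprime_geometric_sum_prime_power:
  fixes a :: int
  assumes p: "prime p" and k: "k \<ge> 1" and a: "coprime a (int p)" and u: "coprime u (fact (p ^ k))"
  shows "coprime (\<Sum>i<u. a ^ i) (int (p ^ k))"
proof -
  define S where "S = (\<Sum>i<u. a ^ i)"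
  have p0: "p > 0" using p by (simp add: prime_gt_0_nat)
  have "p \<le> p ^ k" using k p0 by (simp add: self_le_power)
  have dvd_fact_pk: "d dvd fact (p ^ k)" if "0 < d" "d \<le> p" for d
    using that \<open>p \<le> p ^ k\<close> by (intro dvd_fact) auto
  have "\<not> int p dvd S"
  proof
    assume pS: "int p dvd S"
    show False
    proof (cases "[a = 1] (mod int p)")
      case True
      have "[S = (\<Sum>i<u. 1)] (mod int p)" unfolding S_def
        using True by (intro cong_sum) (metis cong_pow power_one)
      hence "p dvd u" using pS by (simp add: cong_dvd_iff flip: of_nat_dvd_iff)
      moreover have "p dvd fact (p ^ k)" using dvd_fact_pk[OF p0] by simp
      ultimately show False using u p by (metis coprime_common_divisor not_prime_unit)
    next
      case False
      have "a ^ u - 1 = (a - 1) * S" unfolding S_def by (rule power_diff_1_eq)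
      hence "[a ^ u = 1] (mod int p)" using pS by (simp add: cong_iff_dvd_diff)
      hence "ord_int p a dvd u" using ord_int_dvd_iff[OF p0] by blast
      moreover have "ord_int p a dvd fact (p ^ k)"
      proof (rule dvd_fact_pk)
        show "0 < ord_int p a" by (rule ord_int_pos[OF p0 a])
        show "ord_int p a \<le> p"
          using dvd_imp_le[OF ord_int_dvd_totient[OF p0 a]] totient_le[of p] p0 by fastforce
      qed
      ultimately have "ord_int p a = 1" using u by (metis coprime_common_divisor nat_dvd_1_iff_1)
      thus False using False ord_int_dvd_iff[OF p0, of a 1] by simp
    qed
  qed
  hence "coprime (int p) S" using p by (intro prime_imp_coprime) simp_all
  hence "coprime S (int p)" by (rule coprime_commute[THEN iffD1])
  thus ?thesis unfolding S_def by (simp add: coprime_power_right_iff)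
qed

lemma exists_cong_coprime:
  fixes u0 d M :: nat
  assumes "coprime u0 d" "M > 0"
  shows "\<exists>u. [u = u0] (mod d) \<and> coprime u M"
proof -
  define Q where "Q = {q \<in> prime_factors M. \<not> q dvd u0}"
  define u where "u = u0 + d * \<Prod>Q"
  have Q: "finite Q" "\<And>q. q \<in> Q \<Longrightarrow> prime q" unfolding Q_def by auto
  have dvd_prod: "q dvd \<Prod>Q \<longleftrightarrow> q \<in> Q" if q: "prime q" for q
  proof
    assume "q dvd \<Prod>Q"
    then obtain x where "x \<in> Q" "q dvd x" using prime_dvd_prod_iff[OF Q(1) q, of id] by auto
    thus "q \<in> Q" using Q(2) q primes_dvd_imp_eq by metis
  qed (use Q(1) dvd_prodI[of Q q "\<lambda>x. x"] in simp)
  have "\<not> (q dvd u \<and> q dvd M)" if q: "prime q" for q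
  proof (cases "q dvd u0")
    case True
    hence "\<not> q dvd d" using assms(1) q by (metis coprime_common_divisor not_prime_unit)
    thus ?thesis using True q dvd_prod[OF q] unfolding u_def Q_def
      by (auto simp: dvd_add_right_iff prime_dvd_mult_iff)
  next
    case False
    thus ?thesis using q assms(2) dvd_prod[OF q] unfolding u_def Q_def
      by (auto simp: dvd_add_left_iff in_prime_factors_iff)
  qed
  hence "coprime u M"
    by (metis coprime_iff_gcd_eq_1 gcd_dvd1 gcd_dvd2 prime_factor_nat dvd_trans)
  moreover have "[u = u0] (mod d)" unfolding u_def by (simp add: cong_def)
  ultimately show ?thesis by blast
qed

lemma exists_coprime_exponent_same_ord:
  fixes n g i j M :: nat
  assumes g: "coprime n g" and o: "ord n (g ^ i) = ord n (g ^ j)" and M: "M > 0"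
  shows "\<exists>u. coprime u M \<and> [g ^ j = (g ^ i) ^ u] (mod n)"
proof -
  define N where "N = ord n g"
  define c where "c = gcd i N"
  define N' where "N' = N div c"
  have "N > 0" unfolding N_def using g by simp
  have "c dvd N" "gcd j N dvd N" unfolding c_def by simp_all
  have "N div c = N div gcd j N"
    using o ord_power[OF g, of i] ord_power[OF g, of j] unfolding N_def c_def by simp
  hence "gcd j N = c"
    using \<open>N > 0\<close> \<open>c dvd N\<close> \<open>gcd j N dvd N\<close>
    by (metis dvd_div_eq_0_iff dvd_mult_div_cancel gr_implies_not0 mult_cancel_right)
  define i' where "i' = i div c"
  define j' where "j' = j div c"
  have ij: "i = c * i'" "j = c * j'" "N = c * N'"
    using \<open>gcd j N = c\<close> unfolding c_def i'_def j'_def N'_def by (metis dvd_mult_div_cancel gcd_dvd1 gcd_dvd2)+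
  have "coprime i' N'" "coprime j' N'"
    using div_gcd_coprime[of i N] div_gcd_coprime[of j N] \<open>gcd j N = c\<close> \<open>N > 0\<close>
    unfolding c_def i'_def j'_def N'_def by simp_all
  obtain v where v: "[i' * v = 1] (mod N')" using cong_solve_coprime_nat[OF \<open>coprime i' N'\<close>] by auto
  hence "coprime v N'" using coprime_iff_invertible_nat[of v N'] by (auto simp: ac_simps)
  hence "coprime (v * j') N'" using \<open>coprime j' N'\<close> by simp
  then obtain u where u: "[u = v * j'] (mod N')" "coprime u M" using exists_cong_coprime[OF _ M] by blast
  have "[i' * u = 1 * j'] (mod N')"
    using cong_mult[OF cong_refl[of i'] u(1)] cong_mult[OF v cong_refl[of j']]
    by (metis (no_types) cong_trans mult.assoc)
  hence "[i * u = j] (mod N)" unfolding ij cong_def by (simp add: mult.assoc mod_mult_mult1)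
  hence "[g ^ (i * u) = g ^ j] (mod n)" using order_divides_expdiff[OF g] unfolding N_def by simp
  thus ?thesis using u(2) by (auto simp: power_mult cong_sym)
qed

lemma exists_power_cong_odd_prime_power:
  fixes a a' :: int
  assumes p: "prime p" "odd p" and k: "k \<ge> 1" and a: "coprime a (int p)" and a': "coprime a' (int p)"
    and o: "ord_int (p ^ k) a' = ord_int (p ^ k) a" and M: "M > 0"
  shows "\<exists>u. coprime u M \<and> [a' = a ^ u] (mod int (p ^ k))"
proof -
  define n where "n = p ^ k"
  have n1: "n > 1" unfolding n_def using prime_gt_1_nat[OF p(1)] k by (intro one_less_power) auto
  obtain g where "\<forall>k>0. residue_primroot (p ^ k) g"
    using residue_primroot_odd_prime_power_exists[OF p] by blast
  hence g: "residue_primroot n g" unfolding n_def using k by simp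
  hence cg: "coprime n g" unfolding residue_primroot_def by simp
  have "\<exists>i. [nat (b mod int n) = g ^ i] (mod n)" if b: "coprime b (int p)" for b :: int
  proof -
    have cop: "coprime n (nat (b mod int n))"
      using n1 b k prime_gt_0_nat[OF p(1)] by (intro coprime_nat_mod) (auto simp: n_def)
    moreover have "nat (b mod int n) \<noteq> 0" using cop n1 by (intro notI) simp
    moreover have "nat (b mod int n) < n" using n1 by (simp add: nat_less_iff)
    ultimately have "nat (b mod int n) \<in> totatives n"
      by (simp add: totatives_def coprime_commute)
    then obtain i where "nat (b mod int n) = g ^ i mod n"
      using residue_primroot_is_generator[OF n1 g] unfolding bij_betw_def by auto
    thus ?thesis by (auto simp: cong_def)
  qed
  then obtain i j where i: "[nat (a mod int n) = g ^ i] (mod n)" and j: "[nat (a' mod int n) = g ^ j] (mod n)"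
    using a a' by meson
  have "ord n (g ^ i) = ord n (g ^ j)"
    using o ord_cong[OF i] ord_cong[OF j] unfolding ord_int_def n_def by simp
  then obtain u where u: "coprime u M" "[g ^ j = (g ^ i) ^ u] (mod n)"
    using exists_coprime_exponent_same_ord[OF cg _ M] by blast
  have "[nat (a' mod int n) = nat (a mod int n) ^ u] (mod n)"
    using j u(2) cong_pow[OF i, of u] by (metis cong_sym cong_trans)
  hence "[int (nat (a' mod int n)) = int (nat (a mod int n)) ^ u] (mod int n)"
    by (metis cong_int_iff of_nat_power)
  hence "[a' mod int n = (a mod int n) ^ u] (mod int n)" using n1 by simp
  hence "[a' = a ^ u] (mod int n)" by (simp add: cong_def power_mod)
  thus ?thesis using u(1) unfolding n_def by blast
qed

lemma ord_two_power_five: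
  assumes "k \<ge> 2" shows "ord (2 ^ k) (5::nat) = 2 ^ (k - 2)"
proof (cases "k = 2")
  case True
  have "[5 = (1::nat)] (mod 4)" by (simp add: cong_def)
  hence "ord 4 (5::nat) = ord 4 (1::nat)" by (rule ord_cong)
  thus ?thesis using True by simp
next
  case False
  thus ?thesis using assms by (intro ord_twopow_3_5) auto
qed

lemma card_odd_below_double: "card {x \<in> {0..<2 * int M}. odd x} = M"
proof -
  have "{x \<in> {0..<2 * int M}. odd x} = (\<lambda>i. 2 * i + 1) ` {0..<int M}"
    by (auto elim!: oddE)
  moreover have "inj_on (\<lambda>i::int. 2 * i + 1) {0..<int M}" by (rule inj_onI) simp
  ultimately show ?thesis by (simp add: card_image)
qed

lemma pm_five_power_mod_4:
  assumes "(4::int) dvd n"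
  shows "(5 ^ j mod n) mod 4 = 1" "(- (5 ^ j) mod n) mod 4 = 3"
proof -
  have five: "(5::int) ^ j mod 4 = 1" using power_mod[of "5::int" 4 j, symmetric] by simp
  thus "(5 ^ j mod n) mod 4 = 1" using assms by (simp add: mod_mod_cancel)
  have "(- (5 ^ j) mod n) mod 4 = - ((5::int) ^ j) mod 4" using assms by (rule mod_mod_cancel)
  thus "(- (5 ^ j) mod n) mod 4 = 3" using five by (simp add: zmod_zminus1_eq_if)
qed

text \<open>The \<open>\<plusminus>5\<^sup>j\<close> with \<open>j < ord(5) = 2\<^sup>k\<^sup>-\<^sup>2\<close> are pairwise distinct (the two signs
  differ mod 4), so they fill up the \<open>2\<^sup>k\<^sup>-\<^sup>1\<close> odd residues.\<close>

lemma pm_five_powers_eq_odd_residues: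
  fixes k :: nat
  assumes k: "k \<ge> 2"
  defines "n \<equiv> 2 ^ k" and "N \<equiv> ord (2 ^ k) (5::nat)"
  shows "(\<lambda>j. (5::int) ^ j mod int n) ` {..<N} \<union> (\<lambda>j. - ((5::int) ^ j) mod int n) ` {..<N} =
    {x \<in> {0..<int n}. odd x}"
    (is "?A \<union> ?B = ?Odd")
proof -
  have "(2::int) ^ 2 dvd 2 ^ k" by (rule le_imp_power_dvd[OF k])
  hence n4: "(4::int) dvd int n" unfolding n_def by simp
  have n: "n = 2 * N + 2 * N" unfolding N_def n_def ord_two_power_five[OF k]
    using k by (metis add_2_eq_Suc' le_add_diff_inverse2 mult_2 power_Suc)
  have injA: "inj_on (\<lambda>j. (5::int) ^ j mod int n) {..<N}"
  proof -
    have "(5::int) ^ j mod int n = int (5 ^ j mod n)" for j by (simp add: of_nat_mod)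
    moreover have "inj_on (\<lambda>j. 5 ^ j mod n) {..<N}"
      unfolding N_def n_def by (rule inj_power_mod) simp
    ultimately show ?thesis unfolding inj_on_def by simp
  qed
  have injB: "inj_on (\<lambda>j. - ((5::int) ^ j) mod int n) {..<N}"
    using injA unfolding inj_on_def by (metis cong_def cong_minus_minus_iff)
  have A: "x mod 4 = 1" if "x \<in> ?A" for x
    using that pm_five_power_mod_4(1)[OF n4] by auto
  have B: "x mod 4 = 3" if "x \<in> ?B" for x
    using that pm_five_power_mod_4(2)[OF n4] by auto
  have "?A \<union> ?B \<subseteq> ?Odd"
  proof
    fix x assume x: "x \<in> ?A \<union> ?B"
    hence "x mod 4 = 1 \<or> x mod 4 = 3" using A B by blast
    hence "odd x" by presburger
    moreover have "x \<in> {0..<int n}" using x unfolding n_def by auto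
    ultimately show "x \<in> ?Odd" by simp
  qed
  moreover have "card (?A \<union> ?B) = card ?Odd"
  proof -
    have "?A \<inter> ?B = {}" using A B by fastforce
    hence "card (?A \<union> ?B) = 2 * N" using injA injB by (simp add: card_Un_disjoint card_image)
    also have "\<dots> = card {x \<in> {0..<2 * int (2 * N)}. odd x}" by (simp only: card_odd_below_double)
    finally show ?thesis using n by (simp add: algebra_simps)
  qed
  moreover have "finite ?Odd" by (rule finite_subset[of _ "{0..<int n}"]) auto
  ultimately show ?thesis using card_subset_eq by blast
qed

lemma odd_cong_pm_five_power:
  fixes a :: int
  assumes k: "k \<ge> 2" and a: "odd a"
  shows "\<exists>e\<in>{0,1::nat}. \<exists>j::nat. [a = (-1) ^ e * 5 ^ j] (mod int (2 ^ k))"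
proof -
  have "a mod int (2 ^ k) mod 2 = a mod 2" using k by (intro mod_mod_cancel) simp
  hence "odd (a mod int (2 ^ k))" using a by (simp add: odd_iff_mod_2_eq_one)
  hence "a mod int (2 ^ k) \<in> {x \<in> {0..<int (2 ^ k)}. odd x}" by simp
  then obtain j where "a mod int (2 ^ k) = 5 ^ j mod int (2 ^ k) \<or>
      a mod int (2 ^ k) = - (5 ^ j) mod int (2 ^ k)"
    unfolding pm_five_powers_eq_odd_residues[OF k, symmetric] by blast
  hence "[a = (-1) ^ 0 * 5 ^ j] (mod int (2 ^ k)) \<or> [a = (-1) ^ 1 * 5 ^ j] (mod int (2 ^ k))"
    unfolding cong_def by simp
  thus ?thesis by blast
qed

lemma oinv_two_power:
  fixes a :: int
  assumes k: "k \<ge> 2" and a: "odd a"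
  obtains e j where "e \<in> {0, 1}" "[a = (-1) ^ e * 5 ^ j] (mod int (2 ^ k))"
    "oinv 2 k a = (e, ord_int (2 ^ k) (5 ^ j))"
proof -
  define P where "P = (\<lambda>(e::nat, d::nat). e \<in> {0, 1} \<and>
    (\<exists>j::nat. [a = (-1) ^ e * 5 ^ j] (mod int (2 ^ k)) \<and> d = ord_int (2 ^ k) (5 ^ j)))"
  have o: "oinv 2 k a = (SOME x. P x)" unfolding oinv_def P_def using k by simp
  obtain e j where "e \<in> {0, 1::nat}" "[a = (-1) ^ e * 5 ^ j] (mod int (2 ^ k))"
    using odd_cong_pm_five_power[OF k a] by blast
  hence "P (e, ord_int (2 ^ k) (5 ^ j))" unfolding P_def by blast
  hence "P (SOME x. P x)" by (rule someI)
  then obtain e' d' where "(SOME x. P x) = (e', d')" "P (e', d')" by (metis surj_pair)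
  thus ?thesis using o that unfolding P_def by auto
qed

lemma ord_int_of_nat: "n > 0 \<Longrightarrow> ord_int n (int x) = ord n x"
  unfolding ord_int_def by (simp flip: of_nat_mod)

lemma exists_power_cong_two_power:
  fixes a a' :: int
  assumes k: "k \<ge> 2" and a: "odd a" and a': "odd a'" and o: "oinv 2 k a' = oinv 2 k a"
  shows "\<exists>u. coprime u (fact (2 ^ k)) \<and> [a' = a ^ u] (mod int (2 ^ k))"
proof -
  define n :: nat where "n = 2 ^ k"
  obtain e j where ej: "e \<in> {0, 1}" "[a = (-1) ^ e * 5 ^ j] (mod int n)"
      "oinv 2 k a = (e, ord_int n (5 ^ j))"
    using oinv_two_power[OF k a] unfolding n_def by blast
  obtain e' j' where ej': "[a' = (-1) ^ e' * 5 ^ j'] (mod int n)"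
      "oinv 2 k a' = (e', ord_int n (5 ^ j'))"
    using oinv_two_power[OF k a'] unfolding n_def by blast
  have "e' = e" "ord n (5 ^ j) = ord n (5 ^ j')"
    using o ej(3) ej'(2) ord_int_of_nat[of n "5 ^ _"] by (auto simp: n_def)
  moreover have "coprime n (5::nat)" unfolding n_def by simp
  ultimately obtain u where u: "coprime u (fact n)" "[5 ^ j' = (5 ^ j) ^ u] (mod n)"
    using exists_coprime_exponent_same_ord[of n 5 j j' "fact n"] by auto
  have "(2::nat) dvd fact n" using k unfolding n_def by (intro dvd_fact) (auto simp: self_le_power)
  hence "coprime u 2" using u(1) by (meson coprime_divisors dvd_refl)
  hence "odd u" by simp
  hence sign: "((-1::int) ^ e) ^ u = (-1) ^ e" using ej(1) by auto
  have five: "[(5::int) ^ j' = (5 ^ j) ^ u] (mod int n)"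
    using u(2) by (metis cong_int_iff of_nat_numeral of_nat_power)
  have "[a ^ u = ((-1) ^ e * 5 ^ j) ^ u] (mod int n)" using ej(2) by (rule cong_pow)
  also have "((-1::int) ^ e * 5 ^ j) ^ u = (-1) ^ e * (5 ^ j) ^ u" by (simp add: power_mult_distrib sign)
  also have "[(-1::int) ^ e * (5 ^ j) ^ u = (-1) ^ e * 5 ^ j'] (mod int n)"
    using five by (intro cong_mult cong_refl) (rule cong_sym)
  also have "[(-1::int) ^ e * 5 ^ j' = a'] (mod int n)" using ej'(1) \<open>e' = e\<close> by (simp add: cong_sym)
  finally show ?thesis using u(1) unfolding n_def by (blast intro: cong_sym)
qed

lemma exists_power_cong:
  fixes a a' :: int
  assumes p: "prime p" and k: "k \<ge> 1" and a: "coprime a (int p)" and a': "coprime a' (int p)"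
    and o: "oinv p k a' = oinv p k a"
  shows "\<exists>u. coprime u (fact (p ^ k)) \<and> [a' = a ^ u] (mod int (p ^ k))"
proof (cases "p > 2")
  case True
  hence "odd p" using p by (metis prime_odd_nat)
  moreover have "ord_int (p ^ k) a' = ord_int (p ^ k) a" using o True unfolding oinv_def by simp
  ultimately show ?thesis
    using exists_power_cong_odd_prime_power[OF p(1) _ k a a'] by (metis fact_gt_zero)
next
  case False
  hence p2: "p = 2" using prime_ge_2_nat[OF p] by simp
  have "odd a" "odd a'" using a a' p2 by auto
  show ?thesis
  proof (cases "k \<ge> 2")
    case True
    thus ?thesis using exists_power_cong_two_power[OF True \<open>odd a\<close> \<open>odd a'\<close>] o p2 by simp
  next
    case False
    hence "k = 1" using k by simp
    have "[a' = a ^ 1] (mod int 2)"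
      using \<open>odd a\<close> \<open>odd a'\<close> by (simp add: cong_def odd_iff_mod_2_eq_one)
    thus ?thesis using p2 \<open>k = 1\<close> by (intro exI[of _ 1]) simp
  qed
qed

lemma Gamma_eq_CC_Hol:
  fixes a :: int
  assumes p: "prime p" and k: "k \<ge> 1" and a: "coprime a (int p)"
  shows "Gamma p k (oinv p k a) = CC_Hol a (p ^ k)"
proof -
  define a' where "a' = (SOME a'. \<not> int p dvd a' \<and> oinv p k a' = oinv p k a)"
  have pp: "prime (int p)" using p by simp
  have "\<not> int p dvd a"
  proof
    assume "int p dvd a"
    hence "is_unit (int p)" by (rule coprime_common_divisor[OF a _ dvd_refl])
    thus False using not_prime_unit pp by metis
  qed
  hence "\<not> int p dvd a \<and> oinv p k a = oinv p k a" by simp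
  hence "\<not> int p dvd a' \<and> oinv p k a' = oinv p k a" unfolding a'_def by (rule someI)
  hence a': "coprime a' (int p)" "oinv p k a' = oinv p k a"
    using pp prime_imp_coprime[of "int p" a'] by (simp_all add: coprime_commute)
  obtain u where u: "coprime u (fact (p ^ k))" "[a' = a ^ u] (mod int (p ^ k))"
    using exists_power_cong[OF p k a a'] by blast
  have "coprime a (int (p ^ k))" using a by simp
  hence "CC_Hol a' (p ^ k) = CC_Hol a (p ^ k)"
    using u(1) coprime_geometric_sum_prime_power[OF p k a u(1)] u(2) by (rule CC_Hol_power_eq)
  thus ?thesis unfolding Gamma_def a'_def .
qed

theorem proposition6p11:
  fixes m :: nat and a :: int
  assumes "m \<ge> 1" and "coprime a (int m)"
  shows "CC_Hol a m =
    star_prod (\<lambda>p. Gamma p (multiplicity p m) (oinv p (multiplicity p m) a))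
              (prime_factors m)"
proof -
  have "Gamma p (multiplicity p m) (oinv p (multiplicity p m) a) = CC_Hol a (p ^ multiplicity p m)"
    if p: "p \<in> prime_factors m" for p
  proof (rule Gamma_eq_CC_Hol)
    show "prime p" using p by auto
    show "multiplicity p m \<ge> 1"
      using p assms(1) by (simp add: in_prime_factors_iff prime_multiplicity_gt_zero_iff Suc_le_eq)
    show "coprime a (int p)"
      using p assms(2) by (meson coprime_divisors dvd_refl in_prime_factors_imp_dvd of_nat_dvd_iff)
  qed
  hence "star_prod (\<lambda>p. Gamma p (multiplicity p m) (oinv p (multiplicity p m) a)) (prime_factors m)
      = star_prod (\<lambda>p. CC_Hol a (p ^ multiplicity p m)) (prime_factors m)"
    by (rule star_prod_cong)
  thus ?thesis using CC_Hol_eq_star_prod[OF assms] by simp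
qed

end
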